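(* For any prime $p>3$, $$\sum_{k=1}^{p-1}\frac{\binom{2k}{k}}{k3^k}\equiv\frac{3^{p-1}-1}{p}\pmod p.$$
   Context: Congruences between rational numbers whose denominators are coprime to $p$ are understood in the ring of rationals with denominators prime to $p$ (i.e. $p$-adic integers). *)

theory Defs
  imports Complex_Main "HOL-Computational_Algebra.Primes"
begin

text \<open>Congruence of rationals modulo an integer m, understood in the ring of
rationals whose denominators are coprime to m: x and y are congruent iff
x - y, written in lowest terms a/b, has b coprime to m and m dividing a.\<close>
definition rat_cong :: "rat \<Rightarrow> rat \<Rightarrow> int \<Rightarrow> bool" where
  "rat_cong x y m \<longleftrightarrow>
     (let (a, b) = quotient_of (x - y) in coprime b m \<and> m dvd a)"

end

(* Put n = (p - 1)/2.  As n = -1/2 in the p-local integers, binom(2k,k) = (-4)^k binom(n,k) mod p,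
   so the sum is congruent to sum_k binom(n,k) (-4/3)^k / k = sum_{j=1..n} ((-1/3)^j - 1) / j.
   Since binom(p,2j)/p = binom(p-1,2j-1)/(2j) and binom(p-1,m) = (-1)^m mod p, we have
   1/j = -(2/p) binom(p,2j) mod p, which turns the sum into -(2/p) (Q - 2^(p-1)) with
   Q = sum_j binom(p,2j) (-1/3)^j = ((1 + t)^p + (1 - t)^p)/2 for t^2 = -1/3.  Both 1 + t and 1 - t
   have sixth power -64/27, so 3^n Q = +-2^(p-1); together with Q = 1 mod p and Fermat's little
   theorem this identifies -(2/p) (Q - 2^(p-1)) with the Fermat quotient (3^(p-1) - 1)/p mod p. *)

theory Submission
  imports Defs "HOL-Number_Theory.Number_Theory"
begin

(* Any representation a/b is allowed, not only the lowest-terms one used by rat_cong: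
   this makes closure under sums and products immediate. *)
definition p_integral :: "int \<Rightarrow> rat \<Rightarrow> bool" where
  "p_integral P x \<longleftrightarrow> (\<exists>a b. b \<noteq> 0 \<and> coprime b P \<and> x = of_int a / of_int b)"

definition p_cong :: "int \<Rightarrow> rat \<Rightarrow> rat \<Rightarrow> bool" where
  "p_cong P x y \<longleftrightarrow> p_integral P ((x - y) / of_int P)"

lemma p_integral_fraction: "b \<noteq> 0 \<Longrightarrow> coprime b P \<Longrightarrow> p_integral P (of_int a / of_int b)"
  unfolding p_integral_def by blast

lemma p_integral_of_int: "p_integral P (of_int a)"
  using p_integral_fraction[of 1 P a] by simp

lemma p_integral_add:
  assumes "p_integral P x" "p_integral P y"
  shows "p_integral P (x + y)"
proof -
  obtain a b c d where "b \<noteq> 0" "coprime b P" "x = of_int a / of_int b"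
    and "d \<noteq> 0" "coprime d P" "y = of_int c / of_int d"
    using assms unfolding p_integral_def by blast
  then have "x + y = of_int (a * d + c * b) / of_int (b * d)" "b * d \<noteq> 0" "coprime (b * d) P"
    by (simp_all add: field_simps)
  then show ?thesis by (metis p_integral_fraction)
qed

lemma p_integral_mult:
  assumes "p_integral P x" "p_integral P y"
  shows "p_integral P (x * y)"
proof -
  obtain a b c d where "b \<noteq> 0" "coprime b P" "x = of_int a / of_int b"
    and "d \<noteq> 0" "coprime d P" "y = of_int c / of_int d"
    using assms unfolding p_integral_def by blast
  then have "x * y = of_int (a * c) / of_int (b * d)" "b * d \<noteq> 0" "coprime (b * d) P"
    by simp_all
  then show ?thesis by (metis p_integral_fraction)
qed

lemma p_integral_diff:
  assumes "p_integral P x" "p_integral P y"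
  shows "p_integral P (x - y)"
  using p_integral_add[OF assms(1) p_integral_mult[OF p_integral_of_int[of P "-1"] assms(2)]]
  by simp

lemma p_integral_sum: "(\<And>i. i \<in> A \<Longrightarrow> p_integral P (f i)) \<Longrightarrow> p_integral P (sum f A)"
  by (induction A rule: infinite_finite_induct)
    (auto intro: p_integral_add simp: p_integral_of_int[of P 0, simplified])

lemma p_integral_power: "p_integral P x \<Longrightarrow> p_integral P (x ^ k)"
  by (induction k) (auto intro: p_integral_mult simp: p_integral_of_int[of P 1, simplified])

lemma p_cong_refl: "p_cong P x x"
  unfolding p_cong_def using p_integral_of_int[of P 0] by simp

lemma p_cong_trans [trans]: "p_cong P x y \<Longrightarrow> p_cong P y z \<Longrightarrow> p_cong P x z"
  unfolding p_cong_def using p_integral_add by (metis add_divide_distrib diff_add_cancel add_diff_eq)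

lemma p_cong_mult_left: "p_integral P z \<Longrightarrow> p_cong P x y \<Longrightarrow> p_cong P (z * x) (z * y)"
  unfolding p_cong_def using p_integral_mult by (metis right_diff_distrib times_divide_eq_right)

lemma p_cong_sum:
  assumes "\<And>i. i \<in> A \<Longrightarrow> p_cong P (f i) (g i)"
  shows "p_cong P (sum f A) (sum g A)"
proof -
  have "(sum f A - sum g A) / of_int P = (\<Sum>i\<in>A. (f i - g i) / of_int P)"
    by (simp add: sum_subtractf flip: sum_divide_distrib)
  then show ?thesis
    using assms unfolding p_cong_def by (simp add: p_integral_sum)
qed

lemma p_cong_fraction:
  assumes "P dvd a - b" "d \<noteq> 0" "coprime d P"
  shows "p_cong P (of_int a / of_int d) (of_int b / of_int d)"
proof (cases "P = 0")
  case True
  then show ?thesis using assms(1) by (simp add: p_cong_refl)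
next
  case False
  obtain c where "a - b = P * c" using assms(1) by blast
  then have "(of_int a / of_int d - of_int b / of_int d) / of_int P = (of_int c / of_int d :: rat)"
    using False assms(2) by (simp add: field_simps flip: of_int_diff of_int_mult)
  then show ?thesis using assms unfolding p_cong_def by (simp add: p_integral_fraction)
qed

lemma p_cong_of_diff_product:
  assumes "(x - y) / of_int P = of_int a / of_int P * (of_int b / of_int P) / of_int c"
    and "P dvd b" "P dvd a" "P \<noteq> 0" "c \<noteq> 0" "coprime c P"
  shows "p_cong P x y"
proof -
  obtain u v where "a = P * u" "b = P * v" using assms(2,3) by (elim dvdE)
  then have "(x - y) / of_int P = of_int (u * v) / of_int c"
    using assms(1,4) by simp
  with p_integral_fraction[OF assms(5,6)] show ?thesis
    unfolding p_cong_def by metis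
qed

lemma p_cong_of_int_imp_dvd:
  assumes "prime P" "p_cong P (of_int a) (of_int b)"
  shows "P dvd a - b"
proof -
  obtain c d where "d \<noteq> 0" "coprime d P" and cd: "(of_int a - of_int b) / of_int P = (of_int c / of_int d :: rat)"
    using assms(2) unfolding p_cong_def p_integral_def by blast
  moreover have "P \<noteq> 0" using assms(1) by auto
  ultimately have "(a - b) * d = P * c"
    by (simp add: field_simps flip: of_int_diff of_int_mult of_int_eq_iff)
  then show ?thesis using \<open>coprime d P\<close>
    by (metis coprime_commute coprime_dvd_mult_left_iff dvd_triv_left)
qed

lemma p_cong_imp_rat_cong:
  assumes "prime P" "p_cong P x y"
  shows "rat_cong x y P"
proof -
  obtain c d where "d \<noteq> 0" "coprime d P" and cd: "(x - y) / of_int P = (of_int c / of_int d :: rat)"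
    using assms(2) unfolding p_cong_def p_integral_def by blast
  obtain a b where q: "quotient_of (x - y) = (a, b)" by fastforce
  have "b > 0" "coprime a b" and ab: "x - y = of_int a / of_int b"
    using quotient_of_denom_pos[OF q] quotient_of_coprime[OF q] quotient_of_div[OF q] by auto
  moreover have "P \<noteq> 0" using assms(1) by auto
  ultimately have "of_int (a * d) = (of_int (P * c * b) :: rat)"
    using cd \<open>d \<noteq> 0\<close> unfolding ab by (simp add: field_simps)
  then have eq: "a * d = P * c * b" by (simp only: of_int_eq_iff)
  then have "b dvd d"
    using \<open>coprime a b\<close> by (metis coprime_commute coprime_dvd_mult_right_iff dvd_triv_right)
  then have "coprime b P" using \<open>coprime d P\<close> by (meson coprime_common_divisor coprime_def dvd_trans)
  moreover have "P dvd a"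
    using eq \<open>coprime d P\<close> by (metis coprime_commute coprime_dvd_mult_left_iff dvd_mult2 dvd_triv_left)
  ultimately show ?thesis unfolding rat_cong_def using q by simp
qed

lemma coprime_prime_of_less:
  assumes "prime p" "0 < k" "k < p"
  shows "coprime (int k) (int p)"
  using assms by (metis coprime_commute coprime_int_iff dvd_imp_le not_less prime_imp_coprime)

lemma p_integral_one_third: "prime p \<Longrightarrow> p > 3 \<Longrightarrow> p_integral (int p) (- 1 / 3)"
  using p_integral_fraction[of 3 "int p" "-1"] coprime_prime_of_less[of p 3] by simp

lemma fact_double_cong_binomial:
  fixes n k :: nat
  assumes "k \<le> n"
  shows "[fact (2*k) = (-4)^k * fact k * fact k * int (n choose k)] (mod int (2*n+1))"
  using assms
proof (induction k)
  case 0
  then show ?case by simp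
next
  case (Suc k)
  then have "k < n" by simp
  have "int (Suc k) * int (n choose Suc k) = (int n - int k) * int (n choose k)"
    using binomial_absorption[of k n] binomial_absorb_comp[of n k] \<open>k < n\<close>
    by (metis of_nat_diff of_nat_mult less_imp_le)
  then have rhs: "(-4)^Suc k * fact (Suc k) * fact (Suc k) * int (n choose Suc k)
      = ((-4)^k * fact k * fact k * int (n choose k)) * ((-4) * (int k + 1) * (int n - int k))"
  proof -
    have "(-4::int)^Suc k * fact (Suc k) * fact (Suc k) * int (n choose Suc k)
        = (-4)^k * (-4) * fact k * fact k * (int k + 1) * (int (Suc k) * int (n choose Suc k))"
      by (simp add: fact_Suc algebra_simps)
    then show ?thesis
      unfolding \<open>int (Suc k) * _ = _\<close> by (simp add: algebra_simps)
  qed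
  have lhs: "(fact (2 * Suc k) :: int) = fact (2*k) * ((2 * int k + 1) * (2 * int k + 2))"
    by (simp add: fact_Suc algebra_simps)
  \<comment> \<open>2k + 1 = -2 (n - k) modulo 2n + 1\<close>
  have "[(2 * int k + 1) * (2 * int k + 2) = (-4) * (int k + 1) * (int n - int k)] (mod int (2*n+1))"
    unfolding cong_iff_dvd_diff dvd_def by (rule exI[of _ "2 * int k + 2"]) (simp add: algebra_simps)
  with Suc.IH[OF less_imp_le[OF \<open>k < n\<close>]] show ?case
    unfolding lhs rhs by (rule cong_mult)
qed

lemma central_binomial_cong:
  fixes n k :: nat
  assumes p: "prime (2*n+1)" and "k < 2*n+1"
  shows "[int ((2*k) choose k) = (-4)^k * int (n choose k)] (mod int (2*n+1))"
proof (cases "k \<le> n")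
  case True
  have "(fact (2*k) :: int) = fact k * fact k * int ((2*k) choose k)"
    using binomial_fact_lemma[of k "2*k"]
    by (metis mult_2 add_diff_cancel_left' le_add1 of_nat_fact of_nat_mult)
  with fact_double_cong_binomial[OF True]
  have "[(fact k * fact k) * int ((2*k) choose k) = (fact k * fact k) * ((-4)^k * int (n choose k))]
          (mod int (2*n+1))"
    by (simp add: ac_simps)
  moreover have "coprime (fact k * fact k :: int) (int (2*n+1))"
    using prime_dvd_fact_iff[OF p] \<open>k < 2*n+1\<close> prime_imp_coprime[OF p]
    by (metis coprime_commute coprime_int_iff coprime_mult_left_iff not_le of_nat_fact)
  ultimately show ?thesis by (simp add: cong_mult_lcancel)
next
  case False
  have "(2*n+1) dvd fact k * fact k * ((2*k) choose k)"
    using binomial_fact_lemma[of k "2*k"] prime_dvd_fact_iff[OF p] False by (simp add: mult_2)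
  moreover have "\<not> (2*n+1) dvd fact k" using prime_dvd_fact_iff[OF p] \<open>k < 2*n+1\<close> by simp
  ultimately have "int (2*n+1) dvd int ((2*k) choose k)"
    using p prime_dvd_mult_iff by (metis int_dvd_int_iff)
  moreover have "n choose k = 0" using False by simp
  ultimately show ?thesis by (simp only: cong_0_iff of_nat_0 mult_zero_right)
qed

lemma binomial_prime_minus_one_cong:
  assumes "prime p" "m < p"
  shows "[int ((p - 1) choose m) = (-1)^m] (mod int p)"
  using assms(2)
proof (induction m)
  case 0
  then show ?case by simp
next
  case (Suc m)
  have "Suc m * ((p - 1) choose Suc m) = (p - 1 - m) * ((p - 1) choose m)"
    by (simp only: binomial_absorption binomial_absorb_comp)
  moreover have "int (p - 1 - m) = int p - 1 - int m"
    using Suc.prems by (simp add: of_nat_diff)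
  ultimately have "int (Suc m) * int ((p - 1) choose Suc m) = (int p - 1 - int m) * int ((p - 1) choose m)"
    by (metis of_nat_mult)
  also have "[\<dots> = (-1 - int m) * (-1)^m] (mod int p)"
    using Suc by (intro cong_mult) (simp_all add: cong_iff_dvd_diff)
  also have "(-1 - int m) * (-1)^m = int (Suc m) * (-1)^Suc m" by (simp add: algebra_simps)
  finally show ?case
    using coprime_prime_of_less[OF assms(1), of "Suc m"] Suc.prems cong_mult_lcancel by blast
qed

lemma inverse_cong_binomial:
  assumes "prime p" "0 < j" "2*j < p"
  shows "p_cong (int p) (1 / of_nat j) (- (2 / of_nat p) * of_nat (p choose (2*j)))"
proof -
  let ?C = "(p - 1) choose (2*j - 1)"
  have "2*j * (p choose (2*j)) = p * ?C"
    using times_binomial_minus1_eq[of "2*j" p] assms by simp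
  then have "2 * of_nat j * of_nat (p choose (2*j)) = (of_nat p * of_nat ?C :: rat)"
    by (metis of_nat_mult of_nat_numeral)
  then have "- (2 / of_nat p) * of_nat (p choose (2*j)) = (of_int (- int ?C) / of_int (int j) :: rat)"
    using assms prime_gt_0_nat[OF assms(1)] by (simp add: field_simps)
  moreover have "int p dvd 1 - (- int ?C)"
    using binomial_prime_minus_one_cong[OF assms(1), of "2*j - 1"] assms
    by (simp add: cong_iff_dvd_diff neg_one_odd_power add.commute)
  ultimately show ?thesis
    using p_cong_fraction[of "int p" 1 "- int ?C" "int j"] coprime_prime_of_less[OF assms(1), of j] assms
    by simp
qed

lemma harmonic_sum_cong:
  assumes "prime p" "p = 2*n+1" "\<And>j. p_integral (int p) (y j)"
  shows "p_cong (int p) (\<Sum>j=1..n. y j / of_nat j)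
           (- (2 / of_nat p) * (\<Sum>j=1..n. of_nat (p choose (2*j)) * y j))"
proof -
  have "p_cong (int p) (\<Sum>j=1..n. y j * (1 / of_nat j))
          (\<Sum>j=1..n. y j * (- (2 / of_nat p) * of_nat (p choose (2*j))))"
    using assms by (intro p_cong_sum p_cong_mult_left inverse_cong_binomial) auto
  then show ?thesis by (simp add: sum_distrib_left ac_simps)
qed

lemma binomial_div_index_Suc:
  fixes x :: "'a::field_char_0"
  assumes "0 < k"
  shows "of_nat (Suc m choose k) * x^k / of_nat k
       = of_nat (m choose k) * x^k / of_nat k + of_nat (Suc m choose k) * x^k / of_nat (Suc m)"
proof -
  obtain j where k: "k = Suc j" using assms by (cases k) auto
  have "of_nat (Suc j) * of_nat (Suc m choose Suc j) = (of_nat (Suc m) * of_nat (m choose j) :: 'a)"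
    by (metis Suc_times_binomial of_nat_mult)
  then have "of_nat (m choose j) / of_nat (Suc j) = (of_nat (Suc m choose Suc j) / of_nat (Suc m) :: 'a)"
    by (simp add: field_simps del: of_nat_Suc)
  then have "of_nat (Suc m choose Suc j) / of_nat (Suc j)
      = of_nat (m choose Suc j) / of_nat (Suc j) + (of_nat (Suc m choose Suc j) / of_nat (Suc m) :: 'a)"
    by (simp add: add_divide_distrib del: of_nat_Suc)
  then show ?thesis
    unfolding k by (metis distrib_right times_divide_eq_left)
qed

lemma sum_binomial_power_from_1:
  fixes x :: "'a::comm_ring_1"
  shows "(\<Sum>k=1..m. of_nat (m choose k) * x^k) = (1 + x)^m - 1"
proof -
  have "(1 + x)^m = (\<Sum>k\<le>m. of_nat (m choose k) * x^k)"
    using binomial_ring[of x 1 m] by (simp add: add.commute)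
  also have "\<dots> = 1 + (\<Sum>k=1..m. of_nat (m choose k) * x^k)"
    by (simp add: atMost_atLeast0 sum.atLeast_Suc_atMost)
  finally show ?thesis by simp
qed

lemma sum_binomial_power_div_index:
  fixes x :: "'a::field_char_0"
  shows "(\<Sum>k=1..m. of_nat (m choose k) * x^k / of_nat k) = (\<Sum>j=1..m. ((1 + x)^j - 1) / of_nat j)"
proof (induction m)
  case 0
  then show ?case by simp
next
  case (Suc m)
  have "(\<Sum>k=1..Suc m. of_nat (Suc m choose k) * x^k / of_nat k)
      = (\<Sum>k=1..Suc m. of_nat (m choose k) * x^k / of_nat k)
        + (\<Sum>k=1..Suc m. of_nat (Suc m choose k) * x^k) / of_nat (Suc m)"
    by (simp add: binomial_div_index_Suc sum.distrib del: of_nat_Suc flip: sum_divide_distrib)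
  also have "(\<Sum>k=1..Suc m. of_nat (m choose k) * x^k / of_nat k)
      = (\<Sum>k=1..m. of_nat (m choose k) * x^k / of_nat k)"
    by simp
  also have "\<dots> = (\<Sum>j=1..m. ((1 + x)^j - 1) / of_nat j)"
    by (rule Suc.IH)
  also have "(\<Sum>k=1..Suc m. of_nat (Suc m choose k) * x^k) = (1 + x)^Suc m - 1"
    by (rule sum_binomial_power_from_1)
  finally show ?case by simp
qed

definition even_binomial_sum :: "nat \<Rightarrow> 'a::comm_semiring_1 \<Rightarrow> 'a" where
  "even_binomial_sum m x = (\<Sum>j\<le>m div 2. of_nat (m choose (2*j)) * x ^ j)"

lemma sum_if_even:
  fixes m :: nat
  shows "(\<Sum>k\<le>m. if even k then f k else 0) = (\<Sum>j\<le>m div 2. f (2*j) :: 'a::comm_monoid_add)"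
proof -
  have "{k. k \<le> m \<and> even k} = (*) 2 ` {..m div 2}" by (auto elim!: evenE)
  then show ?thesis
    by (simp add: sum.If_cases Int_def sum.reindex inj_on_def)
qed

lemma binomial_plus_minus:
  fixes t :: "'a::comm_ring_1"
  shows "(1 + t)^m + (1 - t)^m = 2 * even_binomial_sum m (t^2)"
proof -
  have "(1 + t)^m + (1 - t)^m = (\<Sum>k\<le>m. of_nat (m choose k) * (t^k + (-t)^k))"
    using binomial_ring[of t 1 m] binomial_ring[of "-t" 1 m]
    by (simp add: sum.distrib algebra_simps)
  also have "\<dots> = (\<Sum>k\<le>m. if even k then 2 * (of_nat (m choose k) * t^k) else 0)"
    by (intro sum.cong) (auto simp: algebra_simps)
  finally show ?thesis
    by (simp add: sum_if_even even_binomial_sum_def sum_distrib_left power_mult)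
qed

lemma even_binomial_sum_one:
  assumes "0 < m"
  shows "even_binomial_sum m (1 :: 'a::{idom, ring_char_0}) = 2 ^ (m - 1)"
proof -
  have "(2 :: 'a) ^ m = 2 * 2 ^ (m - 1)"
    using assms by (simp flip: power_Suc)
  then have "2 * even_binomial_sum m (1 :: 'a) = 2 * 2 ^ (m - 1)"
    using binomial_plus_minus[of "1 :: 'a" m] assms by (simp add: zero_power)
  then show ?thesis by simp
qed

lemma sum_even_binomial_power_minus_1:
  fixes x :: "'a::{idom, ring_char_0}"
  assumes "0 < m"
  shows "(\<Sum>j=1..m div 2. of_nat (m choose (2*j)) * (x ^ j - 1)) = even_binomial_sum m x - 2 ^ (m - 1)"
proof -
  have "(\<Sum>j=1..m div 2. of_nat (m choose (2*j)) * (x ^ j - 1))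
      = (\<Sum>j\<le>m div 2. of_nat (m choose (2*j)) * (x ^ j - 1))"
    by (intro sum.mono_neutral_left) (auto simp: Suc_le_eq)
  also have "\<dots> = even_binomial_sum m x - even_binomial_sum m 1"
    by (simp add: even_binomial_sum_def right_diff_distrib sum_subtractf)
  finally show ?thesis using even_binomial_sum_one[OF assms] by simp
qed

lemma of_rat_even_binomial_sum:
  "of_rat (even_binomial_sum m x) = even_binomial_sum m (of_rat x)"
  by (simp add: even_binomial_sum_def of_rat_sum of_rat_mult of_rat_power)

lemma one_plus_power_6:
  fixes s :: "'a::field_char_0"
  assumes "s^2 = - 1/3"
  shows "(1 + s)^6 = - 64/27"
proof -
  have "(1 + s)^2 = 2/3 + 2 * s"
    using assms by (simp add: power2_eq_square algebra_simps)
  moreover have "(1 + s)^6 = ((1 + s)^2)^3"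
    by (simp flip: power_mult)
  ultimately have "(1 + s)^6 = (2/3 + 2 * s)^3"
    by simp
  also have "\<dots> = 8/27 + 8/3 * s + 8 * s^2 + 8 * s * s^2"
    by (simp add: power3_eq_cube power2_eq_square algebra_simps)
  finally show ?thesis using assms by simp
qed

lemma even_binomial_sum_add_6:
  "even_binomial_sum (m + 6) (- 1/3 :: rat) = - 64/27 * even_binomial_sum m (- 1/3)"
proof -
  define t :: complex where "t = \<i> * of_real (sqrt 3) / 3"
  have "t^2 = \<i>^2 * (of_real (sqrt 3))^2 / 9"
    unfolding t_def by (simp add: power_divide power_mult_distrib)
  also have "(of_real (sqrt 3) :: complex)^2 = 3"
    by (simp flip: of_real_power)
  finally have "t^2 = - 1/3" by simp
  then have "(1 + t)^6 = - 64/27" "(1 - t)^6 = - 64/27"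
    using one_plus_power_6[of t] one_plus_power_6[of "- t"] by simp_all
  have E: "of_rat (even_binomial_sum k (- 1/3)) = ((1 + t)^k + (1 - t)^k) / 2" for k
    using binomial_plus_minus[of t k] \<open>t^2 = - 1/3\<close>
    by (simp add: of_rat_even_binomial_sum of_rat_divide of_rat_minus)
  have "of_rat (even_binomial_sum (m + 6) (- 1/3)) = (of_rat (- 64/27 * even_binomial_sum m (- 1/3)) :: complex)"
    unfolding of_rat_mult E using \<open>(1 + t)^6 = - 64/27\<close> \<open>(1 - t)^6 = - 64/27\<close>
    by (simp add: power_add of_rat_divide of_rat_minus algebra_simps)
  then show ?thesis by (simp only: of_rat_eq_iff)
qed

lemma abs_even_binomial_sum_minus_third:
  assumes "odd m" "\<not> 3 dvd m"
  shows "\<bar>3 ^ (m div 2) * even_binomial_sum m (- 1/3 :: rat)\<bar> = 2 ^ (m - 1)"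
  using assms
proof (induction m rule: less_induct)
  case (less m)
  have "m = 1 \<or> m = 5 \<or> m \<ge> 6"
    using less.prems by presburger
  then consider "m = 1" | "m = 5" | "m \<ge> 6"
    by blast
  then show ?case
  proof cases
    case 1
    then show ?thesis by (simp add: even_binomial_sum_def)
  next
    case 2
    have "{..(5::nat) div 2} = {0, 1, 2}" by auto
    then have "even_binomial_sum 5 (- 1/3 :: rat) = - 16/9"
      by (simp add: even_binomial_sum_def eval_nat_numeral)
    with 2 show ?thesis by simp
  next
    case 3
    then obtain k where "m = k + 6" using le_Suc_ex by (metis add.commute)
    then have k: "odd k" "\<not> 3 dvd k" "m div 2 = k div 2 + 3" "m - 1 = (k - 1) + 6"
      using less.prems by presburger+
    then have "\<bar>3 ^ (k div 2) * even_binomial_sum k (- 1/3 :: rat)\<bar> = 2 ^ (k - 1)"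
      using less.IH \<open>m = k + 6\<close> by simp
    moreover have "3 ^ (m div 2) * even_binomial_sum m (- 1/3 :: rat)
        = - 64 * (3 ^ (k div 2) * even_binomial_sum k (- 1/3))"
      unfolding k(3) using even_binomial_sum_add_6[of k] \<open>m = k + 6\<close> by (simp add: power_add)
    ultimately show ?thesis
      unfolding k(4) by (simp add: power_add abs_mult)
  qed
qed

lemma even_binomial_sum_prime_cong_1:
  assumes "prime p" "odd p" "p_integral (int p) x"
  shows "p_cong (int p) (even_binomial_sum p x) 1"
proof -
  have "p_cong (int p) (of_nat (p choose (2*j)) * x ^ j) (if j = 0 then 1 else 0)"
    if "j \<le> p div 2" for j
  proof (cases "j = 0")
    case False
    then have "p dvd p choose (2*j)"
      using dvd_choose_prime[of "2*j" p] that assms(1,2) by (auto elim!: oddE)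
    then have "p_cong (int p) (of_int (int (p choose (2*j))) / of_int 1) (of_int 0 / of_int 1)"
      by (intro p_cong_fraction) (simp_all add: int_dvd_int_iff)
    from p_cong_mult_left[OF p_integral_power[OF assms(3)] this, of j]
    show ?thesis using False by (simp add: mult.commute)
  qed (simp add: p_cong_refl)
  then have "p_cong (int p) (even_binomial_sum p x) (\<Sum>j\<le>p div 2. if j = 0 then 1 else 0)"
    unfolding even_binomial_sum_def by (rule p_cong_sum) simp
  then show ?thesis by simp
qed

lemma fermat_theorem_int:
  assumes "prime p" "0 < a" "a < p"
  shows "[int a ^ (p - 1) = 1] (mod int p)"
proof -
  have "\<not> p dvd a" using assms by (auto dest: dvd_imp_le)
  then have "[a ^ (p - 1) = 1] (mod p)" by (rule fermat_theorem[OF assms(1)])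
  then show ?thesis using cong_int_iff[of "a ^ (p - 1)" 1 p] by simp
qed

(* With B = 3^n, A = 2^(p-1) and s = +-1 both factors B - s and 2A - B^2 - sB are divisible by p,
   so by this factorisation the difference, divided by P = p, is p-integral. *)
lemma fermat_quotient_identity:
  fixes A B P q s :: "'a::field"
  assumes "B * q = s * A" "s * s = 1" "B \<noteq> 0" "P \<noteq> 0"
  shows "(- (2 / P) * (q - A) - (B * B - 1) / P) / P = (B - s) / P * ((2 * A - B * B - s * B) / P) / B"
  using assms by (simp add: field_simps) algebra

lemma fermat_quotient_three_cong:
  fixes p n :: nat and q :: rat
  assumes p: "prime p" "p > 3" "p = 2*n+1"
    and q_abs: "\<bar>3 ^ n * q\<bar> = 2 ^ (p - 1)" and q_cong: "p_cong (int p) q 1"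
  shows "p_cong (int p) (- (2 / of_nat p) * (q - 2 ^ (p - 1))) ((3 ^ (p - 1) - 1) / of_nat p)"
proof -
  obtain \<sigma> :: int where \<sigma>: "\<sigma> * \<sigma> = 1" and q: "3 ^ n * q = of_int \<sigma> * 2 ^ (p - 1)"
  proof (cases "3 ^ n * q \<ge> 0")
    case True
    then show ?thesis using q_abs by (intro that[of 1]) simp_all
  next
    case False
    then show ?thesis using q_abs by (intro that[of "-1"]) simp_all
  qed
  have fermat_2: "[2 ^ (p - 1) = 1] (mod int p)" and fermat_3: "[3 ^ (p - 1) = 1] (mod int p)"
    using fermat_theorem_int[OF p(1), of 2] fermat_theorem_int[OF p(1), of 3] p(2) by simp_all
  have "p_cong (int p) (of_int (\<sigma> * 2 ^ (p - 1))) (of_int (3 ^ n))"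
    using p_cong_mult_left[OF p_integral_of_int[of _ "3 ^ n"] q_cong] q by simp
  then have "[\<sigma> * 2 ^ (p - 1) = 3 ^ n] (mod int p)"
    using p(1) by (simp add: cong_iff_dvd_diff p_cong_of_int_imp_dvd)
  moreover have "[\<sigma> * 2 ^ (p - 1) = \<sigma>] (mod int p)"
    using cong_scalar_left[OF fermat_2] by simp
  ultimately have "[3 ^ n = \<sigma>] (mod int p)"
    by (metis cong_sym cong_trans)
  then have "[2 * 2 ^ (p - 1) - 3 ^ (p - 1) - \<sigma> * 3 ^ n = 2 * 1 - 1 - \<sigma> * \<sigma>] (mod int p)"
    using fermat_2 fermat_3 by (intro cong_diff cong_mult cong_refl)
  moreover have "(3::int) ^ (p - 1) = 3 ^ n * 3 ^ n" "(3::rat) ^ (p - 1) = 3 ^ n * 3 ^ n"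
    using p(3) by (simp_all add: mult_2 power_add)
  ultimately have dvd_b: "int p dvd 2 * 2 ^ (p - 1) - 3 ^ n * 3 ^ n - \<sigma> * 3 ^ n"
    using \<sigma> by (simp add: cong_0_iff)
  have dvd_a: "int p dvd 3 ^ n - \<sigma>"
    using \<open>[3 ^ n = \<sigma>] (mod int p)\<close> by (simp add: cong_iff_dvd_diff)
  have "coprime (3 ^ n) (int p)"
    using coprime_prime_of_less[OF p(1), of 3] p(2) by simp
  have eq: "(- (2 / of_nat p) * (q - 2 ^ (p - 1)) - (3 ^ (p - 1) - 1) / of_nat p) / of_int (int p)
      = of_int (3 ^ n - \<sigma>) / of_int (int p)
        * (of_int (2 * 2 ^ (p - 1) - 3 ^ n * 3 ^ n - \<sigma> * 3 ^ n) / of_int (int p)) / of_int (3 ^ n)"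
    using fermat_quotient_identity[of "3 ^ n" q "of_int \<sigma>" "2 ^ (p - 1)" "of_nat p"] q p(1)
      \<sigma>[THEN arg_cong[where f = "of_int :: int \<Rightarrow> rat"]]
    unfolding \<open>(3::rat) ^ (p - 1) = 3 ^ n * 3 ^ n\<close> by (simp add: prime_gt_0_nat)
  show ?thesis
    by (rule p_cong_of_diff_product[OF eq dvd_b dvd_a])
      (use p(1) \<open>coprime (3 ^ n) (int p)\<close> in \<open>simp_all add: prime_gt_0_nat\<close>)
qed

lemma central_binomial_term_cong:
  assumes "prime p" "p > 3" "p = 2*n+1" "0 < k" "k < p"
  shows "p_cong (int p) (of_nat ((2*k) choose k) / (of_nat k * 3 ^ k))
           (of_nat (n choose k) * (- 4/3) ^ k / of_nat k)"
proof -
  have "int p dvd int ((2*k) choose k) - (-4)^k * int (n choose k)"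
    using central_binomial_cong[of n k] assms by (simp add: cong_iff_dvd_diff)
  moreover have "coprime (int k * 3 ^ k) (int p)"
    using coprime_prime_of_less[OF assms(1), of k] coprime_prime_of_less[OF assms(1), of 3] assms by simp
  ultimately have "p_cong (int p) (of_int (int ((2*k) choose k)) / of_int (int k * 3 ^ k))
      (of_int ((-4)^k * int (n choose k)) / of_int (int k * 3 ^ k))"
    using assms by (intro p_cong_fraction) simp_all
  moreover have "(of_nat (n choose k) * (- 4/3) ^ k / of_nat k :: rat)
      = of_int ((-4)^k * int (n choose k)) / of_int (int k * 3 ^ k)"
    unfolding power_divide[of "- 4 :: rat" 3 k] by (simp add: field_simps)
  ultimately show ?thesis by simp
qed

lemma central_binomial_sum_cong:
  assumes "prime p" "p > 3" "p = 2*n+1"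
  shows "p_cong (int p) (\<Sum>k=1..p-1. of_nat ((2*k) choose k) / (of_nat k * 3 ^ k))
           (\<Sum>j=1..n. ((- 1/3) ^ j - 1) / of_nat j)"
proof -
  have "p_cong (int p) (\<Sum>k=1..p-1. of_nat ((2*k) choose k) / (of_nat k * 3 ^ k))
      (\<Sum>k=1..p-1. of_nat (n choose k) * (- 4/3) ^ k / of_nat k)"
    using assms by (intro p_cong_sum central_binomial_term_cong) auto
  also have "(\<Sum>k=1..p-1. of_nat (n choose k) * (- 4/3 :: rat) ^ k / of_nat k)
      = (\<Sum>k=1..n. of_nat (n choose k) * (- 4/3) ^ k / of_nat k)"
    using assms(3) by (intro sum.mono_neutral_right) auto
  also have "\<dots> = (\<Sum>j=1..n. ((1 + (- 4/3)) ^ j - 1) / of_nat j)"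
    by (rule sum_binomial_power_div_index)
  finally show ?thesis by simp
qed

theorem lemma2p4:
  fixes p :: nat
  assumes "prime p" and "p > 3"
  shows "rat_cong (\<Sum>k=1..p-1. of_nat ((2*k) choose k) / (of_nat k * 3 ^ k))
                  ((3 ^ (p - 1) - 1) / of_nat p) (int p)"
proof -
  define n where "n = p div 2"
  have "odd p" using assms prime_odd_nat by auto
  then have pn: "p = 2*n+1" unfolding n_def by presburger
  have third: "p_integral (int p) (- 1/3)" using assms by (rule p_integral_one_third)
  have "p_cong (int p) (\<Sum>k=1..p-1. of_nat ((2*k) choose k) / (of_nat k * 3 ^ k))
      (\<Sum>j=1..n. ((- 1/3) ^ j - 1) / of_nat j)"
    using assms pn by (rule central_binomial_sum_cong)
  also have "p_cong (int p) \<dots> (- (2 / of_nat p) * (\<Sum>j=1..n. of_nat (p choose (2*j)) * ((- 1/3) ^ j - 1)))"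
    using assms(1) pn
    by (rule harmonic_sum_cong) (intro p_integral_diff p_integral_power third p_integral_of_int[of _ 1, simplified])
  also have "\<dots> = - (2 / of_nat p) * (even_binomial_sum p (- 1/3) - 2 ^ (p - 1))"
    using sum_even_binomial_power_minus_1[of p "- 1/3 :: rat"] assms by (simp add: n_def)
  also have "p_cong (int p) \<dots> ((3 ^ (p - 1) - 1) / of_nat p)"
  proof (rule fermat_quotient_three_cong[OF assms pn])
    have "\<not> 3 dvd p"
      using primes_dvd_imp_eq[of 3 p] assms by auto
    then show "\<bar>3 ^ n * even_binomial_sum p (- 1/3 :: rat)\<bar> = 2 ^ (p - 1)"
      unfolding n_def by (rule abs_even_binomial_sum_minus_third[OF \<open>odd p\<close>])
    show "p_cong (int p) (even_binomial_sum p (- 1/3)) 1"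
      using assms(1) \<open>odd p\<close> third by (rule even_binomial_sum_prime_cong_1)
  qed
  finally show ?thesis using assms(1) by (intro p_cong_imp_rat_cong) simp_all
qed

end
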